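(* Let $G$ be an amenable group and, for $i=1,\ldots,n$, let $A_i\subseteq G$ have positive Banach density $d(A_i)=\alpha_i$. Let $\beta=\prod_{i=1}^n\alpha_i$, $0\le\varepsilon<\beta^2$, and $r=\left\lfloor\frac{\beta-\varepsilon}{\beta^2-\varepsilon}\right\rfloor$. Then $\bigcap_{i=1}^n\Delta_\varepsilon(A_i)$ is $r$-syndetic, and its lower Banach density is at least $1/r$.
   Context: A finite $K\subseteq G$ is $(H,\varepsilon)$-invariant if $K\ne\emptyset$ and $|hK\triangle K|/|K|<\varepsilon$ for all $h\in H$; $G$ is amenable if such $K$ exist for every finite $H\subseteq G$ and $\varepsilon>0$. $d(A)$ is the supremum of all $\alpha$ such that for every finite $H$ and $\varepsilon>0$ there is an $(H,\varepsilon)$-invariant $K$ with $|A\cap K|/|K|\ge\alpha$; the lower Banach density $\underline{d}(A)$ is the supremum of all $\alpha$ such that for some finite $H$ and some $\varepsilon>0$ every $(H,\varepsilon)$-invariant $K$ satisfies $|A\cap K|/|K|\ge\alpha$. $\Delta_\varepsilon(A)=\{g\in G\mid d(A\cap gA)>\varepsilon\}$. A set $S\subseteq G$ is $k$-syndetic if $G=FS$ for some $F\subseteq G$ with $|F|\le k$. *)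

theory Defs
  imports "HOL-Analysis.Analysis"
begin

text \<open>The group G is the ambient type 'a of class group_add (not assumed commutative);
  the group operation is written +, so the left translate hK is (\<lambda>k. h + k) ` K.\<close>

definition ltrans :: "'a::group_add \<Rightarrow> 'a set \<Rightarrow> 'a set" where
  "ltrans h K = (\<lambda>k. h + k) ` K"

definition invariant_set :: "'a::group_add set \<Rightarrow> real \<Rightarrow> 'a set \<Rightarrow> bool" where
  "invariant_set H \<epsilon> K \<longleftrightarrow> finite K \<and> K \<noteq> {} \<and>
     (\<forall>h\<in>H. real (card (ltrans h K - K \<union> (K - ltrans h K))) / real (card K) < \<epsilon>)"

definition amenable :: "'a::group_add itself \<Rightarrow> bool" where
  "amenable _ \<longleftrightarrow> (\<forall>H::'a set. \<forall>\<epsilon>>0. finite H \<longrightarrow> (\<exists>K. invariant_set H \<epsilon> K))"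

definition banach_density :: "'a::group_add set \<Rightarrow> real" where
  "banach_density A = Sup {\<alpha>. \<forall>H \<epsilon>. finite H \<and> \<epsilon> > 0 \<longrightarrow>
      (\<exists>K. invariant_set H \<epsilon> K \<and> real (card (A \<inter> K)) / real (card K) \<ge> \<alpha>)}"

definition lower_banach_density :: "'a::group_add set \<Rightarrow> real" where
  "lower_banach_density A = Sup {\<alpha>. \<exists>H \<epsilon>. finite H \<and> \<epsilon> > 0 \<and>
      (\<forall>K. invariant_set H \<epsilon> K \<longrightarrow> real (card (A \<inter> K)) / real (card K) \<ge> \<alpha>)}"

definition Delta :: "real \<Rightarrow> 'a::group_add set \<Rightarrow> 'a set" where
  "Delta \<epsilon> A = {g. banach_density (A \<inter> ltrans g A) > \<epsilon>}"

definition syndetic :: "nat \<Rightarrow> 'a::group_add set \<Rightarrow> bool" where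
  "syndetic k S \<longleftrightarrow> (\<exists>F. finite F \<and> card F \<le> k \<and> UNIV = (\<Union>f\<in>F. ltrans f S))"

end

theory Submission
  imports Defs
begin

text \<open>
  Write \<open>\<alpha>\<^sub>i = d(A\<^sub>i)\<close>, \<open>\<beta> = \<Prod>\<alpha>\<^sub>i\<close> and \<open>S = \<Inter>\<^sub>i \<Delta>\<^sub>\<epsilon>(A\<^sub>i)\<close>.  Call \<open>g\<^sub>1, \<dots>, g\<^sub>m\<close>
  separated if \<open>-g\<^sub>j + g\<^sub>k \<notin> S\<close> for \<open>j < k\<close>.  A maximal separated list is a covering set, so \<open>S\<close>
  is \<open>m\<close>-syndetic, and a set covered by \<open>m\<close> translates has lower Banach density \<open>\<ge> 1/m\<close>.
  It remains to bound \<open>m\<close>: for each \<open>i\<close> choose a Folner window \<open>K\<^sub>i\<close> in which \<open>A\<^sub>i\<close> has density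
  almost \<open>\<alpha>\<^sub>i\<close>; in the product \<open>\<Pi>\<^sub>i K\<^sub>i\<close> the \<open>m\<close> product sets \<open>\<Pi>\<^sub>i (g\<^sub>j + A\<^sub>i) \<inter> K\<^sub>i\<close> have relative
  size about \<open>\<beta>\<close> and pairwise overlaps of relative size about \<open>\<epsilon>\<close>.  Cauchy--Schwarz then gives
  \<open>m \<beta>\<^sup>2 - \<beta> \<le> (m - 1) \<epsilon>\<close>, i.e. \<open>m \<le> (\<beta> - \<epsilon>) / (\<beta>\<^sup>2 - \<epsilon>)\<close>.
\<close>

abbreviation ratio :: "'a set \<Rightarrow> 'a set \<Rightarrow> real" where
  "ratio B K \<equiv> real (card (B \<inter> K)) / real (card K)"

lemma inj_ltrans: "inj_on ((+) (g::'a::group_add)) X"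
  by (rule inj_onI) simp

lemma card_ltrans [simp]: "card (ltrans g X) = card X"
  unfolding ltrans_def by (rule card_image[OF inj_ltrans])

lemma finite_ltrans [simp]: "finite (ltrans g X) \<longleftrightarrow> finite X"
  unfolding ltrans_def by (rule finite_image_iff[OF inj_ltrans])

lemma ltrans_Int: "ltrans g (X \<inter> Y) = ltrans g X \<inter> ltrans g Y"
  unfolding ltrans_def by (rule image_Int[OF inj_ltrans])

lemma ltrans_ltrans: "ltrans a (ltrans b X) = ltrans (a + b) X"
  unfolding ltrans_def by (auto simp: image_image add.assoc)

lemma ltrans_0 [simp]: "ltrans 0 X = X"
  by (simp add: ltrans_def)

lemma mem_ltrans: "x \<in> ltrans g X \<longleftrightarrow> -g + x \<in> X"
proof
  assume "x \<in> ltrans g X"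
  then obtain y where "y \<in> X" "x = g + y" unfolding ltrans_def by auto
  then show "-g + x \<in> X" by (simp add: add.assoc[symmetric])
next
  assume "-g + x \<in> X"
  moreover have "x = g + (-g + x)" by (simp add: add.assoc[symmetric])
  ultimately show "x \<in> ltrans g X" unfolding ltrans_def by (rule rev_image_eqI)
qed

lemma ltrans_Int_shift: "ltrans g B \<inter> K = ltrans g (B \<inter> ltrans (-g) K)"
  by (simp add: ltrans_Int ltrans_ltrans)

lemma ltrans_Int_ltrans: "ltrans g A \<inter> ltrans g' A = ltrans g (A \<inter> ltrans (-g + g') A)"
  by (simp add: ltrans_Int ltrans_ltrans add.assoc[symmetric])

text \<open>The Banach density of \<open>A\<close> is then
  the supremum of the values that \<open>ratio A K\<close> reaches frequently along this filter, the lower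
  Banach density the supremum of those it reaches eventually.\<close>

definition invariance :: "'a::group_add set filter" where
  "invariance = (INF p\<in>{p. finite (fst p) \<and> snd p > 0}. principal {K. invariant_set (fst p) (snd p) K})"

lemma invariant_set_mono:
  "invariant_set H e K \<Longrightarrow> H' \<subseteq> H \<Longrightarrow> e \<le> e' \<Longrightarrow> invariant_set H' e' K"
  unfolding invariant_set_def by fastforce

lemma eventually_invariance:
  "eventually P invariance \<longleftrightarrow> (\<exists>H e. finite H \<and> e > 0 \<and> (\<forall>K. invariant_set H e K \<longrightarrow> P K))"
proof -
  define B :: "('a set \<times> real) set" where "B = {p. finite (fst p) \<and> snd p > 0}"
  define F where "F p = principal {K. invariant_set (fst p) (snd p) K}" for p :: "'a set \<times> real"
  have "({}, 1) \<in> B" by (simp add: B_def)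
  then have ne: "B \<noteq> {}" by blast
  have dir: "\<exists>x\<in>B. F x \<le> inf (F a) (F b)" if "a \<in> B" "b \<in> B" for a b
  proof (intro bexI)
    show "(fst a \<union> fst b, min (snd a) (snd b)) \<in> B" using that by (simp add: B_def)
    show "F (fst a \<union> fst b, min (snd a) (snd b)) \<le> inf (F a) (F b)"
      unfolding F_def inf_principal by (auto elim: invariant_set_mono)
  qed
  have "eventually P invariance \<longleftrightarrow> (\<exists>p\<in>B. eventually P (F p))"
    unfolding invariance_def B_def[symmetric] F_def[symmetric] by (rule eventually_INF_base[OF ne dir])
  also have "\<dots> \<longleftrightarrow> (\<exists>H e. finite H \<and> e > 0 \<and> (\<forall>K. invariant_set H e K \<longrightarrow> P K))"
    by (auto simp: B_def F_def eventually_principal)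
  finally show ?thesis .
qed

lemma invariance_nontrivial:
  assumes "amenable TYPE('a::group_add)"
  shows "(invariance :: 'a set filter) \<noteq> bot"
proof
  assume "(invariance :: 'a set filter) = bot"
  then have "eventually (\<lambda>_. False) (invariance :: 'a set filter)" by simp
  then obtain H and e :: real where "finite H" "e > 0" "\<forall>K::'a set. \<not> invariant_set H e K"
    unfolding eventually_invariance by blast
  with assms show False unfolding amenable_def by blast
qed

lemma eventually_invariance_finite: "eventually (\<lambda>K. finite K \<and> K \<noteq> {}) invariance"
  unfolding eventually_invariance invariant_set_def
  by (intro exI[of _ "{}"] exI[of _ "1::real"]) simp

lemma ratio_le_1: "finite K \<Longrightarrow> ratio B K \<le> 1"
  by (cases "card K = 0") (auto simp: divide_le_eq card_mono)

lemma banach_density_frequently: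
  "banach_density B = Sup {\<alpha>. \<exists>\<^sub>F K in invariance. \<alpha> \<le> ratio B K}"
proof -
  have "(\<exists>\<^sub>F K in invariance. \<alpha> \<le> ratio B K) \<longleftrightarrow>
    (\<forall>H \<epsilon>. finite H \<and> \<epsilon> > 0 \<longrightarrow> (\<exists>K. invariant_set H \<epsilon> K \<and> \<alpha> \<le> ratio B K))" for \<alpha>
    unfolding frequently_def eventually_invariance by blast
  then show ?thesis unfolding banach_density_def by simp
qed

lemma lower_banach_density_eventually:
  "lower_banach_density B = Sup {\<alpha>. \<forall>\<^sub>F K in invariance. \<alpha> \<le> ratio B K}"
  unfolding lower_banach_density_def eventually_invariance by simp

lemma bdd_above_frequently_ratio: "bdd_above {\<alpha>. \<exists>\<^sub>F K in invariance. \<alpha> \<le> ratio B K}"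
proof (rule bdd_aboveI)
  fix \<alpha> assume "\<alpha> \<in> {\<alpha>. \<exists>\<^sub>F K in invariance. \<alpha> \<le> ratio B K}"
  then have "\<exists>\<^sub>F K in invariance. \<alpha> \<le> ratio B K \<and> (finite K \<and> K \<noteq> {})"
    by (intro frequently_eventually_frequently[OF _ eventually_invariance_finite]) simp
  then obtain K where "\<alpha> \<le> ratio B K" "finite K" by (auto dest: frequently_ex)
  then show "\<alpha> \<le> 1" using ratio_le_1[of K B] by linarith
qed

lemma eventually_ratio_less:
  assumes "banach_density B < c"
  shows "\<forall>\<^sub>F K in invariance. ratio B K < c"
proof (rule ccontr)
  assume "\<not> ?thesis"
  then have "\<exists>\<^sub>F K in invariance. c \<le> ratio B K" by (simp add: not_eventually not_less)
  then have "c \<le> banach_density B"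
    unfolding banach_density_frequently by (intro cSup_upper bdd_above_frequently_ratio) simp
  with assms show False by simp
qed

lemma frequently_ratio_ge:
  assumes "amenable TYPE('a::group_add)" and "c < banach_density (B :: 'a set)"
  shows "\<exists>\<^sub>F K in invariance. c \<le> ratio B K"
proof -
  have "\<exists>\<^sub>F K in (invariance :: 'a set filter). 0 \<le> ratio B K"
    using invariance_nontrivial[OF assms(1)] by (simp add: frequently_const_iff)
  then have "{\<alpha>. \<exists>\<^sub>F K in invariance. \<alpha> \<le> ratio B K} \<noteq> {}" by blast
  from less_cSup_iff[OF this bdd_above_frequently_ratio] assms(2)
  obtain \<alpha> where "c < \<alpha>" "\<exists>\<^sub>F K in invariance. \<alpha> \<le> ratio B K"
    unfolding banach_density_frequently by blast
  then show ?thesis by (auto elim: frequently_elim1)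
qed

lemma lower_banach_density_ge:
  assumes "amenable TYPE('a::group_add)"
    and "\<And>d. d > 0 \<Longrightarrow> \<forall>\<^sub>F K in invariance. c - d \<le> ratio (S :: 'a set) K"
  shows "c \<le> lower_banach_density S"
proof -
  let ?X = "{\<alpha>. \<forall>\<^sub>F K in invariance. \<alpha> \<le> ratio S K}"
  have "bdd_above ?X"
  proof (rule bdd_aboveI)
    fix \<alpha> assume "\<alpha> \<in> ?X"
    then have "\<forall>\<^sub>F K in invariance. \<alpha> \<le> ratio S K \<and> (finite K \<and> K \<noteq> {})"
      by (intro eventually_conj[OF _ eventually_invariance_finite]) simp
    then obtain K where "\<alpha> \<le> ratio S K" "finite K"
      using eventually_frequently[OF invariance_nontrivial[OF assms(1)]] by (blast dest: frequently_ex)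
    then show "\<alpha> \<le> 1" using ratio_le_1[of K S] by linarith
  qed
  note bdd = this
  show ?thesis unfolding lower_banach_density_eventually
  proof (rule field_le_epsilon)
    fix d :: real assume "d > 0"
    then have "c - d \<in> ?X" using assms(2) by simp
    then have "c - d \<le> Sup ?X" by (rule cSup_upper[OF _ bdd])
    then show "c \<le> Sup ?X + d" by linarith
  qed
qed

lemma card_Int_le_shift:
  assumes "finite K" "finite L"
  shows "card (X \<inter> K) \<le> card (X \<inter> L) + card (K - L)"
proof -
  have "card (X \<inter> K) \<le> card ((X \<inter> L) \<union> (K - L))"
    by (rule card_mono) (use assms in auto)
  also have "\<dots> \<le> card (X \<inter> L) + card (K - L)" by (rule card_Un_le)
  finally show ?thesis .
qed

definition translation_close :: "real \<Rightarrow> 'a::group_add \<Rightarrow> 'a set \<Rightarrow> bool" where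
  "translation_close d g K \<longleftrightarrow> (\<forall>B.
    real (card (ltrans g B \<inter> K)) \<le> real (card (B \<inter> K)) + d * card K \<and>
    real (card (B \<inter> K)) \<le> real (card (ltrans g B \<inter> K)) + d * card K)"

lemma eventually_translation_close:
  assumes "d > 0"
  shows "\<forall>\<^sub>F K in invariance. translation_close d g K"
  unfolding eventually_invariance translation_close_def
proof (intro exI conjI allI impI)
  fix K B assume K: "invariant_set {-g} d K"
  define L where "L = ltrans (-g) K"
  define D where "D = L - K \<union> (K - L)"
  have fin: "finite K" "finite L" "K \<noteq> {}" using K by (auto simp: invariant_set_def L_def)
  then have pos: "real (card K) > 0" by (simp add: card_gt_0_iff)
  have "real (card D) / real (card K) < d" using K by (simp add: invariant_set_def L_def D_def)
  then have sym: "real (card D) < d * card K" using pos by (simp add: pos_divide_less_eq mult.commute)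
  have "card (L - K) \<le> card D" "card (K - L) \<le> card D"
    using fin by (auto simp: D_def intro: card_mono)
  moreover have "card (ltrans g B \<inter> K) = card (B \<inter> L)"
    by (simp add: ltrans_Int_shift L_def)
  moreover have "card (B \<inter> L) \<le> card (B \<inter> K) + card (L - K)"
    "card (B \<inter> K) \<le> card (B \<inter> L) + card (K - L)"
    using fin by (auto intro: card_Int_le_shift)
  ultimately have "card (ltrans g B \<inter> K) \<le> card (B \<inter> K) + card D"
    "card (B \<inter> K) \<le> card (ltrans g B \<inter> K) + card D" by linarith+
  then have "real (card (ltrans g B \<inter> K)) \<le> real (card (B \<inter> K)) + real (card D)"
    "real (card (B \<inter> K)) \<le> real (card (ltrans g B \<inter> K)) + real (card D)"
    by (simp_all only: of_nat_add[symmetric] of_nat_le_iff)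
  with sym show "real (card (ltrans g B \<inter> K)) \<le> real (card (B \<inter> K)) + d * card K"
    "real (card (B \<inter> K)) \<le> real (card (ltrans g B \<inter> K)) + d * card K"
    by linarith+
qed (use assms in auto)

text \<open>If finitely many translates of \<open>S\<close> cover the group, then \<open>S\<close> has lower Banach density at
  least \<open>1 / card F\<close>: each window is covered by the translates, and each translate meets it about as
  often as \<open>S\<close> does.\<close>

lemma lower_banach_density_cover:
  assumes am: "amenable TYPE('a::group_add)" and fF: "finite F"
    and cov: "UNIV = (\<Union>f\<in>F. ltrans f (S :: 'a set))"
  shows "1 / real (card F) \<le> lower_banach_density S"
proof (rule lower_banach_density_ge[OF am])
  fix d :: real assume d: "d > 0"
  have "F \<noteq> {}" using cov by auto
  then have cF: "real (card F) > 0" using fF by (simp add: card_gt_0_iff)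
  have "\<forall>\<^sub>F K in invariance. \<forall>f\<in>F. translation_close d f K"
    using eventually_translation_close[OF d] by (intro eventually_ball_finite[OF fF]) blast
  with eventually_invariance_finite
  have "\<forall>\<^sub>F K in invariance. (finite K \<and> K \<noteq> {}) \<and> (\<forall>f\<in>F. translation_close d f K)"
    by (rule eventually_conj)
  then show "\<forall>\<^sub>F K in invariance. 1 / real (card F) - d \<le> ratio S K"
  proof (rule eventually_mono, elim conjE)
    fix K assume fK: "finite K" "K \<noteq> {}" and close: "\<forall>f\<in>F. translation_close d f K"
    have "card K \<le> card (\<Union>f\<in>F. ltrans f S \<inter> K)"
      using cov fF fK by (intro card_mono) auto
    also have "\<dots> \<le> (\<Sum>f\<in>F. card (ltrans f S \<inter> K))" by (rule card_UN_le[OF fF])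
    finally have "real (card K) \<le> (\<Sum>f\<in>F. real (card (ltrans f S \<inter> K)))"
      by (metis of_nat_le_iff of_nat_sum)
    also have "\<dots> \<le> (\<Sum>f\<in>F. real (card (S \<inter> K)) + d * card K)"
      using close by (intro sum_mono) (simp add: translation_close_def)
    also have "\<dots> = real (card F) * (real (card (S \<inter> K)) + d * card K)" by simp
    finally have cover_count: "real (card K) \<le> real (card F) * (real (card (S \<inter> K)) + d * card K)" .
    have cK: "real (card K) > 0" using fK by (simp add: card_gt_0_iff)
    have "1 / real (card F) - d = (card K - card F * d * card K) / (card F * card K)"
      using cF cK by (simp add: field_simps)
    also have "\<dots> \<le> (card F * card (S \<inter> K)) / (card F * card K)"
      using cover_count cF cK by (intro divide_right_mono) (simp_all add: algebra_simps)
    also have "\<dots> = ratio S K" using cF by simp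
    finally show "1 / real (card F) - d \<le> ratio S K" .
  qed
qed

definition separated :: "'a::group_add set \<Rightarrow> 'a list \<Rightarrow> bool" where
  "separated S gs \<longleftrightarrow> (\<forall>j k. j < k \<longrightarrow> k < length gs \<longrightarrow> -(gs ! j) + gs ! k \<notin> S)"

lemma separated_snoc:
  assumes "separated S gs" and "\<forall>x\<in>set gs. g \<notin> ltrans x S"
  shows "separated S (gs @ [g])"
  unfolding separated_def
proof (intro allI impI)
  fix j k assume jk: "j < k" "k < length (gs @ [g])"
  show "- ((gs @ [g]) ! j) + (gs @ [g]) ! k \<notin> S"
  proof (cases "k < length gs")
    case True
    then show ?thesis using assms(1) jk by (simp add: separated_def nth_append)
  next
    case False
    then have "k = length gs" "j < length gs" using jk by auto
    moreover have "g \<notin> ltrans (gs ! j) S" using assms(2) \<open>j < length gs\<close> by simp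
    ultimately show ?thesis by (simp add: nth_append mem_ltrans)
  qed
qed

text \<open>A maximal separated list is a covering set: if separated lists have length at most \<open>r\<close>,
  then \<open>S\<close> is \<open>r\<close>-syndetic.\<close>

lemma cover_of_bounded_separated:
  assumes bound: "\<And>gs. separated S gs \<Longrightarrow> length gs \<le> r"
  obtains F where "finite F" "card F \<le> r" "UNIV = (\<Union>f\<in>F. ltrans f S)"
proof -
  have "separated S []" by (simp add: separated_def)
  moreover have "\<forall>ys. separated S ys \<longrightarrow> length ys < Suc r" using bound by (simp add: less_Suc_eq_le)
  ultimately have "\<exists>gs. separated S gs \<and> (\<forall>ys. separated S ys \<longrightarrow> length ys \<le> length gs)"
    by (rule ex_has_greatest_nat)
  then obtain gs where gs: "separated S gs"
    and max: "\<And>ys. separated S ys \<Longrightarrow> length ys \<le> length gs" by blast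
  have "\<exists>x\<in>set gs. g \<in> ltrans x S" for g
  proof (rule ccontr)
    assume "\<not> ?thesis"
    then have "separated S (gs @ [g])" using separated_snoc[OF gs(1)] by blast
    then have "length (gs @ [g]) \<le> length gs" by (rule max)
    then show False by simp
  qed
  then have "UNIV = (\<Union>f\<in>set gs. ltrans f S)" by blast
  moreover have "card (set gs) \<le> r" using card_length[of gs] bound[OF gs(1)] by linarith
  ultimately show ?thesis using that[of "set gs"] by blast
qed

text \<open>Cauchy--Schwarz for the counting function of \<open>m\<close> subsets of a finite set \<open>P\<close>.\<close>

lemma sum_card_squared_le:
  assumes fP: "finite P" and sub: "\<And>j. j < m \<Longrightarrow> S j \<subseteq> P"
  shows "(\<Sum>j<m. real (card (S j)))^2 \<le> real (card P) * (\<Sum>j<m. \<Sum>k<m. real (card (S j \<inter> S k)))"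
proof -
  define f where "f x = (\<Sum>j<m. indicator (S j) x :: real)" for x
  have count: "(\<Sum>x\<in>P. indicator X x :: real) = real (card X)" if "X \<subseteq> P" for X
    using fP that by (simp add: indicator_def sum.If_cases Int_absorb1 Int_commute)
  have "(\<Sum>x\<in>P. f x) = (\<Sum>j<m. \<Sum>x\<in>P. indicator (S j) x :: real)"
    unfolding f_def by (rule sum.swap)
  also have "\<dots> = (\<Sum>j<m. real (card (S j)))" using sub by (simp add: count)
  finally have lin: "(\<Sum>x\<in>P. f x) = (\<Sum>j<m. real (card (S j)))" .
  have "(\<Sum>x\<in>P. (f x)^2) = (\<Sum>x\<in>P. \<Sum>j<m. \<Sum>k<m. indicator (S j \<inter> S k) x :: real)"
    unfolding f_def power2_eq_square sum_product by (simp add: indicator_inter_arith)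
  also have "\<dots> = (\<Sum>j<m. \<Sum>k<m. \<Sum>x\<in>P. indicator (S j \<inter> S k) x :: real)"
    by (simp add: sum.swap[of _ P])
  also have "\<dots> = (\<Sum>j<m. \<Sum>k<m. real (card (S j \<inter> S k)))"
    using sub by (intro sum.cong refl) (simp add: count le_infI1)
  finally have quad: "(\<Sum>x\<in>P. (f x)^2) = (\<Sum>j<m. \<Sum>k<m. real (card (S j \<inter> S k)))" .
  have "(\<Sum>x\<in>P. f x)^2 \<le> (\<Sum>x\<in>P. (f x)^2) * real (card P)"
    by (rule sum_squared_le_sum_of_squares)
  then show ?thesis using lin quad by (simp add: mult.commute)
qed

lemma quadratic_count_bound:
  fixes m b c T :: real
  assumes "m \<ge> 1" "b \<ge> 0" "c \<ge> 0" "m * b \<le> T" "T^2 \<le> T + m * (m - 1) * c"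
  shows "m * b^2 - b \<le> (m - 1) * c"
proof (cases "m * b \<le> 1")
  case True
  then have "b * (m * b - 1) \<le> 0" using assms(2) by (simp add: mult_nonneg_nonpos)
  moreover have "(m - 1) * c \<ge> 0" using assms(1,3) by simp
  ultimately show ?thesis by (simp add: power2_eq_square algebra_simps)
next
  case False
  have "(T - m * b) * (T + m * b - 1) \<ge> 0" using assms(4) False by simp
  then have "m * (m * b^2 - b) \<le> T^2 - T" by (simp add: power2_eq_square algebra_simps)
  also have "\<dots> \<le> m * ((m - 1) * c)" using assms(5) by simp
  finally show ?thesis using assms(1) by simp
qed

lemma pairwise_overlap_bound:
  fixes S :: "nat \<Rightarrow> 'a set" and b c :: real
  assumes fP: "finite P" and ne: "P \<noteq> {}" and m: "m \<ge> 1"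
    and sub: "\<And>j. j < m \<Longrightarrow> S j \<subseteq> P"
    and large: "\<And>j. j < m \<Longrightarrow> b * card P \<le> card (S j)"
    and overlap: "\<And>j k. j < k \<Longrightarrow> k < m \<Longrightarrow> card (S j \<inter> S k) \<le> c * card P"
    and "b \<ge> 0" "c \<ge> 0"
  shows "real m * b^2 - b \<le> (real m - 1) * c"
proof -
  define N where "N = real (card P)"
  have N: "N > 0" using fP ne by (simp add: N_def card_gt_0_iff)
  define s where "s j = card (S j) / N" for j
  define q where "q j k = card (S j \<inter> S k) / N" for j k
  define T where "T = (\<Sum>j<m. s j)"
  have q_le: "q j k \<le> c" if "j < m" "k < m" "j \<noteq> k" for j k
  proof (cases "j < k")
    case True
    then show ?thesis using overlap[of j k] that N by (simp add: q_def N_def pos_divide_le_eq)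
  next
    case False
    then show ?thesis using overlap[of k j] that N by (simp add: q_def N_def pos_divide_le_eq Int_commute)
  qed
  have row: "(\<Sum>k<m. q j k) \<le> s j + (real m - 1) * c" if j: "j < m" for j
  proof -
    have "(\<Sum>k<m. q j k) = q j j + (\<Sum>k\<in>{..<m} - {j}. q j k)" using j by (simp add: sum.remove)
    also have "(\<Sum>k\<in>{..<m} - {j}. q j k) \<le> real (card ({..<m} - {j})) * c"
      using q_le j by (intro sum_bounded_above) auto
    finally show ?thesis using j by (simp add: q_def s_def)
  qed
  have "real m * b \<le> T"
  proof -
    have "real (card {..<m}) * b \<le> T"
      unfolding T_def using large N by (intro sum_bounded_below) (simp add: s_def N_def pos_le_divide_eq)
    then show ?thesis by simp
  qed
  moreover have "T^2 \<le> T + real m * (real m - 1) * c"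
  proof -
    have CS: "(\<Sum>j<m. real (card (S j)))^2 \<le> N * (\<Sum>j<m. \<Sum>k<m. real (card (S j \<inter> S k)))"
      unfolding N_def by (rule sum_card_squared_le[OF fP]) (rule sub)
    have "T^2 = (\<Sum>j<m. real (card (S j)))^2 / N^2"
      unfolding T_def s_def by (simp add: sum_divide_distrib[symmetric] power_divide)
    also have "\<dots> \<le> (\<Sum>j<m. \<Sum>k<m. real (card (S j \<inter> S k))) / N"
      using CS N by (simp add: divide_le_eq power2_eq_square mult.commute)
    also have "\<dots> = (\<Sum>j<m. \<Sum>k<m. q j k)" unfolding q_def by (simp add: sum_divide_distrib)
    also have "\<dots> \<le> (\<Sum>j<m. s j + (real m - 1) * c)" using row by (intro sum_mono) auto
    also have "\<dots> = T + real m * (real m - 1) * c" unfolding T_def by (simp add: sum.distrib)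
    finally show ?thesis .
  qed
  ultimately show ?thesis using quadratic_count_bound m assms(7,8) by simp
qed

lemma product_overlap_bound:
  fixes X :: "nat \<Rightarrow> 'i \<Rightarrow> 'a set" and K :: "'i \<Rightarrow> 'a set" and a :: "'i \<Rightarrow> real" and c :: real
  assumes fI: "finite I" and fK: "\<And>i. i \<in> I \<Longrightarrow> finite (K i) \<and> K i \<noteq> {}"
    and m: "m \<ge> 1" and a: "\<And>i. i \<in> I \<Longrightarrow> 0 \<le> a i" and c: "c \<ge> 0"
    and large: "\<And>j i. j < m \<Longrightarrow> i \<in> I \<Longrightarrow> a i * card (K i) \<le> card (X j i \<inter> K i)"
    and overlap: "\<And>j k. j < k \<Longrightarrow> k < m \<Longrightarrow> \<exists>i\<in>I. card (X j i \<inter> X k i \<inter> K i) \<le> c * card (K i)"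
  shows "real m * (\<Prod>i\<in>I. a i)^2 - (\<Prod>i\<in>I. a i) \<le> (real m - 1) * c"
proof (rule pairwise_overlap_bound)
  define P where "P = (\<Pi>\<^sub>E i\<in>I. K i)"
  define S where "S j = (\<Pi>\<^sub>E i\<in>I. X j i \<inter> K i)" for j
  have cardP: "real (card P) = (\<Prod>i\<in>I. real (card (K i)))"
    by (simp add: P_def card_PiE[OF fI])
  show "finite P" using fI fK by (simp add: P_def finite_PiE)
  show "P \<noteq> {}" using fK by (simp add: P_def PiE_eq_empty_iff)
  show "m \<ge> 1" by (fact m)
  show "c \<ge> 0" by (fact c)
  show "0 \<le> (\<Prod>i\<in>I. a i)" using a by (simp add: prod_nonneg)
  show "S j \<subseteq> P" for j by (auto simp: S_def P_def intro: PiE_mono)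
  show "(\<Prod>i\<in>I. a i) * card P \<le> card (S j)" if j: "j < m" for j
  proof -
    have "(\<Prod>i\<in>I. a i) * card P = (\<Prod>i\<in>I. a i * card (K i))"
      by (simp add: cardP prod.distrib)
    also have "\<dots> \<le> (\<Prod>i\<in>I. real (card (X j i \<inter> K i)))"
      using a large j by (intro prod_mono) simp
    also have "\<dots> = card (S j)" by (simp add: S_def card_PiE[OF fI])
    finally show ?thesis .
  qed
  show "card (S j \<inter> S k) \<le> c * card P" if jk: "j < k" "k < m" for j k
  proof -
    obtain i0 where i0: "i0 \<in> I" "card (X j i0 \<inter> X k i0 \<inter> K i0) \<le> c * card (K i0)"
      using overlap[OF jk] by blast
    define g where "g i = (if i = i0 then c * card (K i) else card (K i))" for i
    have "S j \<inter> S k = (\<Pi>\<^sub>E i\<in>I. X j i \<inter> X k i \<inter> K i)"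
      unfolding S_def PiE_Int by (intro PiE_cong) auto
    then have "card (S j \<inter> S k) = (\<Prod>i\<in>I. real (card (X j i \<inter> X k i \<inter> K i)))"
      by (simp add: card_PiE[OF fI])
    also have "\<dots> \<le> (\<Prod>i\<in>I. g i)"
      using i0 by (intro prod_mono) (auto simp: g_def intro: card_mono dest: fK)
    also have "\<dots> = g i0 * (\<Prod>i\<in>I - {i0}. g i)" by (rule prod.remove[OF fI i0(1)])
    also have "(\<Prod>i\<in>I - {i0}. g i) = (\<Prod>i\<in>I - {i0}. real (card (K i)))"
      by (intro prod.cong) (auto simp: g_def)
    also have "g i0 * (\<Prod>i\<in>I - {i0}. real (card (K i))) = c * card P"
      by (simp add: g_def cardP prod.remove[OF fI i0(1)])
    finally show ?thesis .
  qed
qed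

lemma eventually_small_correlations:
  fixes \<epsilon> d :: real
  assumes "finite D" "finite I" "d > 0"
  shows "\<forall>\<^sub>F K in invariance. \<forall>h\<in>D. \<forall>i\<in>I.
    banach_density (A i \<inter> ltrans h (A i)) \<le> \<epsilon> \<longrightarrow> ratio (A i \<inter> ltrans h (A i)) K < \<epsilon> + d"
proof (intro eventually_ball_finite assms(1,2) ballI)
  fix h i
  show "\<forall>\<^sub>F K in invariance. banach_density (A i \<inter> ltrans h (A i)) \<le> \<epsilon> \<longrightarrow>
      ratio (A i \<inter> ltrans h (A i)) K < \<epsilon> + d"
  proof (cases "banach_density (A i \<inter> ltrans h (A i)) \<le> \<epsilon>")
    case True
    then have "banach_density (A i \<inter> ltrans h (A i)) < \<epsilon> + d" using assms(3) by simp
    then show ?thesis by (rule eventually_mono[OF eventually_ratio_less]) simp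
  qed simp
qed

lemma translate_lower_count:
  fixes d \<alpha> :: real
  assumes "finite K" "K \<noteq> {}" and "\<alpha> - d \<le> ratio B K"
    and "real (card (B \<inter> K)) \<le> real (card (ltrans g B \<inter> K)) + d * card K"
  shows "(\<alpha> - 2 * d) * card K \<le> card (ltrans g B \<inter> K)"
proof -
  have "real (card K) > 0" using assms(1,2) by (simp add: card_gt_0_iff)
  then have "(\<alpha> - d) * card K \<le> card (B \<inter> K)" using assms(3) by (simp add: pos_le_divide_eq)
  with assms(4) show ?thesis by (simp add: algebra_simps)
qed

lemma translate_overlap_count:
  fixes c d :: real
  assumes "finite K" "K \<noteq> {}" and "ratio (B \<inter> ltrans (-g + g') B) K < c"
    and "real (card (ltrans g (B \<inter> ltrans (-g + g') B) \<inter> K))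
      \<le> real (card ((B \<inter> ltrans (-g + g') B) \<inter> K)) + d * card K"
  shows "card (ltrans g B \<inter> ltrans g' B \<inter> K) \<le> (c + d) * card K"
proof -
  have "real (card K) > 0" using assms(1,2) by (simp add: card_gt_0_iff)
  then have "card ((B \<inter> ltrans (-g + g') B) \<inter> K) < c * card K"
    using assms(3) by (simp add: pos_divide_less_eq)
  with assms(4) show ?thesis by (simp add: ltrans_Int_ltrans algebra_simps)
qed

lemma separated_witnesses:
  fixes A :: "'i \<Rightarrow> 'a::group_add set" and \<epsilon> d :: real
  assumes am: "amenable TYPE('a)" and fI: "finite I" and d: "d > 0"
    and sep: "separated (\<Inter>i\<in>I. Delta \<epsilon> (A i)) gs"
  obtains K where "\<And>i. i \<in> I \<Longrightarrow> finite (K i) \<and> K i \<noteq> {}"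
    and "\<And>j i. j < length gs \<Longrightarrow> i \<in> I \<Longrightarrow>
      (banach_density (A i) - 2 * d) * card (K i) \<le> card (ltrans (gs ! j) (A i) \<inter> K i)"
    and "\<And>j k. j < k \<Longrightarrow> k < length gs \<Longrightarrow>
      \<exists>i\<in>I. card (ltrans (gs ! j) (A i) \<inter> ltrans (gs ! k) (A i) \<inter> K i) \<le> (\<epsilon> + 2 * d) * card (K i)"
proof -
  define D where "D = (\<lambda>(j, k). -(gs ! j) + gs ! k) ` {(j, k). j < k \<and> k < length gs}"
  have "finite D"
    unfolding D_def by (rule finite_imageI, rule finite_subset[of _ "{..<length gs} \<times> {..<length gs}"]) auto
  define correlation_ok where "correlation_ok K \<longleftrightarrow> (\<forall>h\<in>D. \<forall>i\<in>I.
      banach_density (A i \<inter> ltrans h (A i)) \<le> \<epsilon> \<longrightarrow> ratio (A i \<inter> ltrans h (A i)) K < \<epsilon> + d)" for K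
  define good where "good K \<longleftrightarrow> (finite K \<and> K \<noteq> {}) \<and> (\<forall>g\<in>set gs. translation_close d g K) \<and> correlation_ok K" for K
  have tr: "\<forall>\<^sub>F K in invariance. \<forall>g\<in>set gs. translation_close d g K"
    by (intro eventually_ball_finite finite_set ballI eventually_translation_close d)
  have co: "\<forall>\<^sub>F K in invariance. correlation_ok K"
    unfolding correlation_ok_def by (rule eventually_small_correlations[OF \<open>finite D\<close> fI d])
  have ev: "\<forall>\<^sub>F K in invariance. good K"
    unfolding good_def by (rule eventually_conj[OF eventually_invariance_finite eventually_conj[OF tr co]])
  have "\<exists>K. good K \<and> banach_density (A i) - d \<le> ratio (A i) K" if "i \<in> I" for i
  proof -
    have "\<exists>\<^sub>F K in invariance. banach_density (A i) - d \<le> ratio (A i) K"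
      using d by (intro frequently_ratio_ge[OF am]) simp
    then have "\<exists>\<^sub>F K in invariance. banach_density (A i) - d \<le> ratio (A i) K \<and> good K"
      by (rule frequently_eventually_frequently[OF _ ev])
    then show ?thesis by (auto dest: frequently_ex)
  qed
  then obtain K where K: "\<And>i. i \<in> I \<Longrightarrow> good (K i) \<and> banach_density (A i) - d \<le> ratio (A i) (K i)"
    by metis
  show ?thesis
  proof (rule that)
    fix i assume "i \<in> I"
    then show "finite (K i) \<and> K i \<noteq> {}" using K by (simp add: good_def)
  next
    fix j i assume "j < length gs" "i \<in> I"
    then show "(banach_density (A i) - 2 * d) * card (K i) \<le> card (ltrans (gs ! j) (A i) \<inter> K i)"
      using K by (intro translate_lower_count) (auto simp: good_def translation_close_def)
  next
    fix j k assume jk: "j < k" "k < length gs"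
    define h where "h = -(gs ! j) + gs ! k"
    have "h \<in> D" unfolding D_def h_def using jk by (auto intro: image_eqI[of _ _ "(j, k)"])
    moreover have "h \<notin> (\<Inter>i\<in>I. Delta \<epsilon> (A i))" using sep jk by (simp add: separated_def h_def)
    ultimately obtain i where i: "i \<in> I" "banach_density (A i \<inter> ltrans h (A i)) \<le> \<epsilon>" "h \<in> D"
      by (auto simp: Delta_def not_less)
    have "card (ltrans (gs ! j) (A i) \<inter> ltrans (gs ! k) (A i) \<inter> K i) \<le> (\<epsilon> + d + d) * card (K i)"
      using K[OF i(1)] i jk unfolding h_def
      by (intro translate_overlap_count) (auto simp: good_def translation_close_def correlation_ok_def)
    with i(1) show "\<exists>i\<in>I. card (ltrans (gs ! j) (A i) \<inter> ltrans (gs ! k) (A i) \<inter> K i) \<le> (\<epsilon> + 2 * d) * card (K i)"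
      by (auto simp: algebra_simps)
  qed
qed

lemma separated_length_bound_approx:
  fixes A :: "'i \<Rightarrow> 'a::group_add set" and \<epsilon> d :: real
  assumes am: "amenable TYPE('a)" and fI: "finite I" and d: "d > 0" and \<epsilon>: "\<epsilon> \<ge> 0"
    and small: "\<And>i. i \<in> I \<Longrightarrow> 2 * d \<le> banach_density (A i)"
    and sep: "separated (\<Inter>i\<in>I. Delta \<epsilon> (A i)) gs" and m: "length gs \<ge> 1"
  shows "real (length gs) * (\<Prod>i\<in>I. banach_density (A i) - 2 * d)^2 - (\<Prod>i\<in>I. banach_density (A i) - 2 * d)
    \<le> (real (length gs) - 1) * (\<epsilon> + 2 * d)"
proof -
  obtain K where "\<And>i. i \<in> I \<Longrightarrow> finite (K i) \<and> K i \<noteq> {}"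
    and "\<And>j i. j < length gs \<Longrightarrow> i \<in> I \<Longrightarrow>
      (banach_density (A i) - 2 * d) * card (K i) \<le> card (ltrans (gs ! j) (A i) \<inter> K i)"
    and "\<And>j k. j < k \<Longrightarrow> k < length gs \<Longrightarrow>
      \<exists>i\<in>I. card (ltrans (gs ! j) (A i) \<inter> ltrans (gs ! k) (A i) \<inter> K i) \<le> (\<epsilon> + 2 * d) * card (K i)"
    by (rule separated_witnesses[OF am fI d sep]) blast
  then show ?thesis
    using m small \<epsilon> d by (intro product_overlap_bound[OF fI, where X = "\<lambda>j i. ltrans (gs ! j) (A i)" and K = K]) auto
qed

lemma separated_length_bound:
  fixes A :: "'i \<Rightarrow> 'a::group_add set" and \<epsilon> :: real
  assumes am: "amenable TYPE('a)" and fI: "finite I" and pos: "\<And>i. i \<in> I \<Longrightarrow> banach_density (A i) > 0"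
    and \<epsilon>: "\<epsilon> \<ge> 0" and sep: "separated (\<Inter>i\<in>I. Delta \<epsilon> (A i)) gs" and m: "length gs \<ge> 1"
  shows "real (length gs) * ((\<Prod>i\<in>I. banach_density (A i))^2 - \<epsilon>) \<le> (\<Prod>i\<in>I. banach_density (A i)) - \<epsilon>"
proof -
  define F where "F d = real (length gs) * (\<Prod>i\<in>I. banach_density (A i) - 2 * d)^2
    - (\<Prod>i\<in>I. banach_density (A i) - 2 * d) - (real (length gs) - 1) * (\<epsilon> + 2 * d)" for d :: real
  have "(F \<longlongrightarrow> F 0) (at_right 0)" unfolding F_def by (intro tendsto_intros)
  moreover have "\<forall>\<^sub>F d in at_right 0. F d \<le> 0"
  proof -
    have "\<forall>\<^sub>F d in at_right 0. d < banach_density (A i) / 2" if "i \<in> I" for i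
      using pos[OF that] by (intro order_tendstoD(2)[OF tendsto_ident_at]) simp
    then have "\<forall>\<^sub>F d in at_right 0. \<forall>i\<in>I. d < banach_density (A i) / 2"
      by (intro eventually_ball_finite fI) auto
    then show ?thesis using eventually_at_right_less[of "0::real"]
    proof eventually_elim
      case (elim d)
      have "real (length gs) * (\<Prod>i\<in>I. banach_density (A i) - 2 * d)^2
          - (\<Prod>i\<in>I. banach_density (A i) - 2 * d) \<le> (real (length gs) - 1) * (\<epsilon> + 2 * d)"
        by (rule separated_length_bound_approx[OF am fI elim(2) \<epsilon> _ sep m]) (use elim(1) in auto)
      then show ?case by (simp add: F_def)
    qed
  qed
  ultimately have "F 0 \<le> 0" by (intro tendsto_upperbound[of F]) auto
  then show ?thesis by (simp add: F_def algebra_simps)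
qed

lemma syndetic_of_bounded_separated:
  assumes am: "amenable TYPE('a::group_add)"
    and bound: "\<And>gs. separated (S :: 'a set) gs \<Longrightarrow> length gs \<le> r"
  shows "syndetic r S \<and> 1 / real r \<le> lower_banach_density S"
proof -
  obtain F where F: "finite F" "card F \<le> r" "UNIV = (\<Union>f\<in>F. ltrans f S)"
    by (rule cover_of_bounded_separated[OF bound]) blast
  then have "F \<noteq> {}" by auto
  then have "1 / real r \<le> 1 / real (card F)"
    using F(1,2) by (intro frac_le) (simp_all add: card_gt_0_iff)
  also have "\<dots> \<le> lower_banach_density S" by (rule lower_banach_density_cover[OF am F(1,3)])
  finally show ?thesis using F unfolding syndetic_def by blast
qed

theorem mainTheorem10:
  fixes A :: "nat \<Rightarrow> 'a::group_add set" and n :: nat and \<epsilon> :: real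
  assumes "amenable TYPE('a)"
    and "\<forall>i\<in>{1..n}. banach_density (A i) > 0"
    and "0 \<le> \<epsilon>"
    and "\<epsilon> < (\<Prod>i\<in>{1..n}. banach_density (A i))^2"
  shows "syndetic (nat \<lfloor>((\<Prod>i\<in>{1..n}. banach_density (A i)) - \<epsilon>) /
                          ((\<Prod>i\<in>{1..n}. banach_density (A i))^2 - \<epsilon>)\<rfloor>)
                  (\<Inter>i\<in>{1..n}. Delta \<epsilon> (A i))
       \<and> lower_banach_density (\<Inter>i\<in>{1..n}. Delta \<epsilon> (A i))
           \<ge> 1 / real (nat \<lfloor>((\<Prod>i\<in>{1..n}. banach_density (A i)) - \<epsilon>) /
                          ((\<Prod>i\<in>{1..n}. banach_density (A i))^2 - \<epsilon>)\<rfloor>)"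
proof -
  define \<beta> where "\<beta> = (\<Prod>i\<in>{1..n}. banach_density (A i))"
  have gap: "\<beta>^2 - \<epsilon> > 0" using assms(4) by (simp add: \<beta>_def)
  have "length gs \<le> nat \<lfloor>(\<beta> - \<epsilon>) / (\<beta>^2 - \<epsilon>)\<rfloor>"
    if sep: "separated (\<Inter>i\<in>{1..n}. Delta \<epsilon> (A i)) gs" for gs
  proof (cases "gs = []")
    case False
    then have "real (length gs) * (\<beta>^2 - \<epsilon>) \<le> \<beta> - \<epsilon>"
      unfolding \<beta>_def using assms(2)
      by (intro separated_length_bound[OF assms(1) finite_atLeastAtMost _ assms(3) sep])
        (auto simp: Suc_le_eq)
    then show ?thesis using gap by (intro le_nat_floor) (simp add: pos_le_divide_eq)
  qed simp
  then show ?thesis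
    using syndetic_of_bounded_separated[OF assms(1)] unfolding \<beta>_def by blast
qed

end
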